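(* Let $a,d\in\mathbb C$ with $a\notin\mathbb Z$ and $d\notin\{0,-1,-2,\dots\}$. Then, as an identity of formal power series in $x,y$, $$\mathrm H_5(a;d;x,y)={}_1F_1(a;d;x)\,{}_0F_1(1-a;-y)+\sum_{k=1}^\infty\sum_{l=1}^k\frac{(-1)^{k+l}(k-1)!}{(l-1)!\,l!\,(k-l)!}\,\frac{1}{(1-a)_l(d)_k}\,x^ky^l\,{}_1F_1(a+k;d+k;x)\,{}_0F_1(1-a+l;-y).$$
   Context: Pochhammer symbol: $(\lambda)_k=\Gamma(\lambda+k)/\Gamma(\lambda)$ for every integer $k$ (possibly negative) whenever defined; $(\lambda)_0=1$. ${}_1F_1(a;c;x)=\sum_{k\ge0}\frac{(a)_k}{(c)_k k!}x^k$, ${}_0F_1(c;x)=\sum_{k\ge0}\frac{x^k}{(c)_k k!}$. Confluent Horn function $\mathrm H_5(a;d;x,y)=\sum_{p,q\ge0}\frac{(a)_{p-q}}{(d)_p\,p!\,q!}x^py^q$. All functions are regarded as formal power series in $x,y$; the infinite double sum converges in the formal (degree) topology. *)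

theory Defs
  imports Complex_Main
begin

text \<open>Formal power series in two variables x, y over the complex numbers, represented by
  their coefficient function: f p q is the coefficient of x^p y^q.\<close>
type_synonym bfps = "nat \<Rightarrow> nat \<Rightarrow> complex"

definition bmul :: "bfps \<Rightarrow> bfps \<Rightarrow> bfps" where
  "bmul f g = (\<lambda>p q. \<Sum>i\<le>p. \<Sum>j\<le>q. f i j * g (p - i) (q - j))"

definition bsmult :: "complex \<Rightarrow> bfps \<Rightarrow> bfps" where
  "bsmult c f = (\<lambda>p q. c * f p q)"

definition badd :: "bfps \<Rightarrow> bfps \<Rightarrow> bfps" where
  "badd f g = (\<lambda>p q. f p q + g p q)"

definition bmonom :: "nat \<Rightarrow> nat \<Rightarrow> bfps" where
  "bmonom k l = (\<lambda>p q. if p = k \<and> q = l then 1 else 0)"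

definition ser_x :: "(nat \<Rightarrow> complex) \<Rightarrow> bfps" where
  "ser_x c = (\<lambda>p q. if q = 0 then c p else 0)"

definition ser_y :: "(nat \<Rightarrow> complex) \<Rightarrow> bfps" where
  "ser_y c = (\<lambda>p q. if p = 0 then c q else 0)"

definition neg_y :: "bfps \<Rightarrow> bfps" where
  "neg_y f = (\<lambda>p q. (-1) ^ q * f p q)"

text \<open>Pochhammer symbol with integer index: (\<lambda>)_k = \<Gamma>(\<lambda>+k)/\<Gamma>(\<lambda>);
  for k = -m < 0 this is 1 / ((\<lambda>-m)(\<lambda>-m+1)...(\<lambda>-1)).\<close>
definition poch_int :: "complex \<Rightarrow> int \<Rightarrow> complex" where
  "poch_int lam k = (if k \<ge> 0 then pochhammer lam (nat k)
                     else 1 / pochhammer (lam + of_int k) (nat (- k)))"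

definition hyp1F1_coeff :: "complex \<Rightarrow> complex \<Rightarrow> nat \<Rightarrow> complex" where
  "hyp1F1_coeff a c n = pochhammer a n / (pochhammer c n * fact n)"

definition hyp0F1_coeff :: "complex \<Rightarrow> nat \<Rightarrow> complex" where
  "hyp0F1_coeff c n = 1 / (pochhammer c n * fact n)"

definition F11_x :: "complex \<Rightarrow> complex \<Rightarrow> bfps" where
  "F11_x a c = ser_x (hyp1F1_coeff a c)"

definition F01_negy :: "complex \<Rightarrow> bfps" where
  "F01_negy c = neg_y (ser_y (hyp0F1_coeff c))"

definition H5 :: "complex \<Rightarrow> complex \<Rightarrow> bfps" where
  "H5 a d = (\<lambda>p q. poch_int a (int p - int q) / (pochhammer d p * fact p * fact q))"

text \<open>Formal (degree-topology) summability and sum of a family of bivariate series: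
  each coefficient receives nonzero contributions from only finitely many members.\<close>
definition formal_summable :: "'i set \<Rightarrow> ('i \<Rightarrow> bfps) \<Rightarrow> bool" where
  "formal_summable I F \<longleftrightarrow> (\<forall>p q. finite {i \<in> I. F i p q \<noteq> 0})"

definition formal_sum :: "'i set \<Rightarrow> ('i \<Rightarrow> bfps) \<Rightarrow> bfps" where
  "formal_sum I F = (\<lambda>p q. \<Sum>i \<in> {i \<in> I. F i p q \<noteq> 0}. F i p q)"

end

theory Submission
  imports Defs
begin

text \<open>Compare coefficients of \<open>x^p y^q\<close> after multiplying by
  \<open>(d)\<^sub>p p! q! (1-a)\<^sub>q\<close>. Then \<open>H5\<close> contributes \<open>(-1)^q (a-q)\<^sub>p\<close>, the product
  \<open>1F1 \<cdot> 0F1\<close> contributes \<open>(-1)^q (a)\<^sub>p\<close>, and the \<open>(k,l)\<close>-term contributes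
  \<open>(-1)^(q+k) C(p,k) k! (a+k)\<^sub>p\<^sub>-\<^sub>k C(k-1,l-1) C(q,l)\<close>.
  Summing over \<open>l\<close> by Vandermonde's identity turns \<open>k! \<Sum>\<^sub>l C(k-1,l-1) C(q,l)\<close> into \<open>(q)\<^sub>k\<close>,
  and what remains is the expansion
  \<open>(a-q)\<^sub>p = \<Sum>\<^sub>k C(p,k) (-1)^k (q)\<^sub>k (a+k)\<^sub>p\<^sub>-\<^sub>k\<close>, proved by induction on \<open>p\<close>.\<close>

lemma sum_choose_Suc_eq:
  fixes g :: "nat \<Rightarrow> 'a::comm_semiring_1"
  shows "(\<Sum>k\<le>Suc n. of_nat (Suc n choose k) * g k)
       = (\<Sum>k\<le>n. of_nat (n choose k) * (g k + g (Suc k)))"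
proof -
  have shift: "(\<Sum>k\<le>n. of_nat (n choose k) * g k)
      = g 0 + (\<Sum>k\<le>n. of_nat (n choose Suc k) * g (Suc k))"
    using sum.atMost_Suc_shift[of "\<lambda>k. of_nat (n choose k) * g k" n] by (simp add: binomial_eq_0)
  have "(\<Sum>k\<le>Suc n. of_nat (Suc n choose k) * g k)
      = g 0 + (\<Sum>k\<le>n. of_nat (n choose Suc k) * g (Suc k)) + (\<Sum>k\<le>n. of_nat (n choose k) * g (Suc k))"
    by (subst sum.atMost_Suc_shift) (simp add: sum.distrib distrib_right add_ac)
  also have "\<dots> = (\<Sum>k\<le>n. of_nat (n choose k) * (g k + g (Suc k)))"
    by (simp only: shift [symmetric] sum.distrib distrib_left)
  finally show ?thesis .
qed

lemma pochhammer_diff_expansion: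
  fixes a b :: "'a::comm_ring_1"
  shows "pochhammer (a - b) n
       = (\<Sum>k\<le>n. of_nat (n choose k) * ((-1)^k * pochhammer b k * pochhammer (a + of_nat k) (n - k)))"
proof (induction n arbitrary: a)
  case 0
  then show ?case by simp
next
  case (Suc n)
  let ?g = "\<lambda>k. (-1)^k * pochhammer b k * pochhammer (a + of_nat k) (Suc n - k)"
  have pair: "?g k + ?g (Suc k)
      = (a - b) * ((-1)^k * pochhammer b k * pochhammer (a + 1 + of_nat k) (n - k))"
    if "k \<le> n" for k
  proof -
    have "pochhammer (a + of_nat k) (Suc n - k) = (a + of_nat k) * pochhammer (a + 1 + of_nat k) (n - k)"
      using that by (simp add: Suc_diff_le pochhammer_rec add_ac)
    moreover have "pochhammer (a + of_nat (Suc k)) (Suc n - Suc k) = pochhammer (a + 1 + of_nat k) (n - k)"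
      by (simp add: add_ac)
    ultimately show ?thesis
      by (simp add: pochhammer_rec' algebra_simps)
  qed
  have "(\<Sum>k\<le>Suc n. of_nat (Suc n choose k) * ?g k)
      = (\<Sum>k\<le>n. of_nat (n choose k) * (?g k + ?g (Suc k)))"
    by (rule sum_choose_Suc_eq)
  also have "\<dots> = (a - b) * (\<Sum>k\<le>n. of_nat (n choose k)
                        * ((-1)^k * pochhammer b k * pochhammer (a + 1 + of_nat k) (n - k)))"
    unfolding sum_distrib_left by (intro sum.cong refl) (simp only: atMost_iff pair mult.left_commute)
  also have "\<dots> = (a - b) * pochhammer (a + 1 - b) n"
    using Suc.IH[of "a + 1"] by (simp add: algebra_simps)
  also have "\<dots> = pochhammer (a - b) (Suc n)"
    by (simp add: pochhammer_rec algebra_simps)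
  finally show ?case by simp
qed

lemma sum_choose_pred_mult_choose:
  assumes "1 \<le> k"
  shows "(\<Sum>l=1..k. (k - 1 choose (l - 1)) * (q choose l)) = (q + k - 1) choose k"
proof -
  have "(\<Sum>l=1..k. (k - 1 choose (l - 1)) * (q choose l)) = (\<Sum>l\<le>k. (q choose l) * (k - 1 choose (k - l)))"
  proof (rule sum.mono_neutral_cong_left)
    show "\<forall>l\<in>{..k} - {1..k}. (q choose l) * (k - 1 choose (k - l)) = 0"
      using assms by auto
    show "(k - 1 choose (l - 1)) * (q choose l) = (q choose l) * (k - 1 choose (k - l))"
      if "l \<in> {1..k}" for l
    proof -
      from that have "l - 1 \<le> k - 1" "k - 1 - (l - 1) = k - l" by auto
      then show ?thesis using binomial_symmetric[of "l - 1" "k - 1"] by simp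
    qed
  qed auto
  also have "\<dots> = (q + k - 1) choose k"
    using vandermonde[where r = k and m = q and n = "k - 1"] assms by simp
  finally show ?thesis .
qed

lemma pochhammer_of_nat_eq_fact_choose:
  "pochhammer (of_nat q :: 'a::field_char_0) k = fact k * of_nat ((q + k - 1) choose k)"
proof (cases "q + k = 0")
  case False
  then have "of_nat (q + k - 1) - of_nat k + 1 = (of_nat q :: 'a)"
    by (subst of_nat_diff) auto
  then show ?thesis
    by (simp add: binomial_gbinomial gbinomial_pochhammer')
qed simp

lemma pochhammer_nonzero_if_notin_Ints:
  fixes x :: "'a::field_char_0"
  assumes "x \<notin> \<int>"
  shows "pochhammer x n \<noteq> 0"
  using assms by (auto simp: pochhammer_eq_0_iff)

lemma pochhammer_add_of_nat_nonzero:
  fixes x :: "'a::field_char_0"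
  assumes "\<forall>m::nat. x \<noteq> - of_nat m"
  shows "pochhammer (x + of_nat k) n \<noteq> 0"
proof
  assume "pochhammer (x + of_nat k) n = 0"
  then obtain j where "x + of_nat k = - of_nat j" by (auto simp: pochhammer_eq_0_iff)
  then have "x = - of_nat (j + k)" by (simp add: algebra_simps)
  with assms show False by blast
qed

lemma poch_int_diff_mult_pochhammer:
  assumes "a \<notin> \<int>"
  shows "poch_int a (int p - int q) * pochhammer (1 - a) q = (-1)^q * pochhammer (a - of_nat q) p"
proof -
  have reflect: "pochhammer (1 - a) q = (-1)^q * pochhammer (a - of_nat q) q"
    using pochhammer_minus[of "a - 1" q] by (simp add: algebra_simps)
  show ?thesis
  proof (cases "q \<le> p")
    case True
    then have "poch_int a (int p - int q) = pochhammer a (p - q)"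
      by (simp add: poch_int_def nat_diff_distrib)
    moreover have "pochhammer (a - of_nat q) p = pochhammer (a - of_nat q) q * pochhammer a (p - q)"
      using pochhammer_product[OF True, of "a - of_nat q"] by simp
    ultimately show ?thesis using reflect by (simp add: algebra_simps)
  next
    case False
    then have "poch_int a (int p - int q) = 1 / pochhammer (a - of_nat q + of_nat p) (q - p)"
      by (simp add: poch_int_def of_nat_diff algebra_simps nat_diff_distrib)
    moreover have "pochhammer (a - of_nat q + of_nat p) (q - p) \<noteq> 0"
      using assms by (intro pochhammer_nonzero_if_notin_Ints) simp
    moreover have "pochhammer (a - of_nat q) q
        = pochhammer (a - of_nat q) p * pochhammer (a - of_nat q + of_nat p) (q - p)"
      using False by (intro pochhammer_product) simp
    ultimately show ?thesis using reflect by (simp add: field_simps)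
  qed
qed

lemma sum_delta_mult:
  assumes "finite A"
  shows "(\<Sum>j\<in>A. (if j = l then c else 0) * f j) = (if l \<in> A then c * f l else (0::'a::semiring_0))"
proof -
  have "(\<Sum>j\<in>A. (if j = l then c else 0) * f j) = (\<Sum>j\<in>A. if j = l then c * f l else 0)"
    by (rule sum.cong) auto
  then show ?thesis using assms by simp
qed

lemma bmul_bmonom:
  "bmul (bmonom k l) G p q = (if k \<le> p \<and> l \<le> q then G (p - k) (q - l) else 0)"
proof -
  have "bmul (bmonom k l) G p q
      = (\<Sum>i\<le>p. (if i = k then 1 else 0) * (\<Sum>j\<le>q. (if j = l then 1 else 0) * G (p - i) (q - j)))"
    unfolding bmul_def bmonom_def by (intro sum.cong refl) (auto simp: sum_distrib_left)
  then show ?thesis by (simp only: sum_delta_mult finite_atMost atMost_iff) auto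
qed

lemma bmul_ser_x_ser_y:
  "bmul (ser_x f) (ser_y g) p q = f p * g q"
proof -
  have "bmul (ser_x f) (ser_y g) p q
      = (\<Sum>i\<le>p. (if i = p then 1 else 0) * (\<Sum>j\<le>q. (if j = 0 then f i else 0) * g (q - j)))"
    unfolding bmul_def ser_x_def ser_y_def by (intro sum.cong refl) (auto simp: sum_distrib_left)
  then show ?thesis by (simp only: sum_delta_mult finite_atMost atMost_iff) auto
qed

lemma neg_y_ser_y: "neg_y (ser_y g) = ser_y (\<lambda>q. (-1)^q * g q)"
  by (simp add: neg_y_def ser_y_def fun_eq_iff)

lemma formal_sum_eq_sum:
  assumes "finite S" "S \<subseteq> I" "\<And>i. i \<in> I - S \<Longrightarrow> F i p q = 0"
  shows "formal_sum I F p q = (\<Sum>i\<in>S. F i p q)"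
  unfolding formal_sum_def using assms by (intro sum.mono_neutral_left) auto

lemma F11_x_mult_F01_negy_coeff:
  "bmul (F11_x b c) (F01_negy e) p q = hyp1F1_coeff b c p * ((-1)^q * hyp0F1_coeff e q)"
  by (simp add: F11_x_def F01_negy_def neg_y_ser_y bmul_ser_x_ser_y)

definition H5_term_weight :: "complex \<Rightarrow> complex \<Rightarrow> nat \<Rightarrow> nat \<Rightarrow> complex" where
  "H5_term_weight a d k l = (-1) ^ (k + l) * fact (k - 1) / (fact (l - 1) * fact l * fact (k - l))
                             / (pochhammer (1 - a) l * pochhammer d k)"

definition H5_term :: "complex \<Rightarrow> complex \<Rightarrow> nat \<times> nat \<Rightarrow> bfps" where
  "H5_term a d = (\<lambda>(k, l). bsmult (H5_term_weight a d k l)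
      (bmul (bmonom k l) (bmul (F11_x (a + of_nat k) (d + of_nat k)) (F01_negy (1 - a + of_nat l)))))"

lemma H5_term_coeff:
  "H5_term a d (k, l) p q
     = (if k \<le> p \<and> l \<le> q
        then H5_term_weight a d k l * (hyp1F1_coeff (a + of_nat k) (d + of_nat k) (p - k)
               * ((-1)^(q - l) * hyp0F1_coeff (1 - a + of_nat l) (q - l)))
        else 0)"
  by (simp add: H5_term_def bsmult_def bmul_bmonom F11_x_mult_F01_negy_coeff)

lemma H5_term_support: "H5_term a d (k, l) p q \<noteq> 0 \<Longrightarrow> k \<le> p \<and> l \<le> q"
  by (simp add: H5_term_coeff split: if_splits)

lemma formal_summable_H5_term: "formal_summable {(k, l). 1 \<le> l \<and> l \<le> k} (H5_term a d)"
  unfolding formal_summable_def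
proof (intro allI)
  fix p q
  have "{i \<in> {(k, l). 1 \<le> l \<and> l \<le> k}. H5_term a d i p q \<noteq> 0} \<subseteq> {..p} \<times> {..q}"
    using H5_term_support by auto
  then show "finite {i \<in> {(k, l). 1 \<le> l \<and> l \<le> k}. H5_term a d i p q \<noteq> 0}"
    by (rule finite_subset) simp
qed

lemma formal_sum_H5_term_coeff:
  "formal_sum {(k, l). 1 \<le> l \<and> l \<le> k} (H5_term a d) p q = (\<Sum>k=1..p. \<Sum>l=1..k. H5_term a d (k, l) p q)"
proof -
  have "formal_sum {(k, l). 1 \<le> l \<and> l \<le> k} (H5_term a d) p q
      = (\<Sum>i\<in>Sigma {1..p} (\<lambda>k. {1..k}). H5_term a d i p q)"
    by (rule formal_sum_eq_sum) (auto dest: H5_term_support)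
  then show ?thesis by (simp add: sum.Sigma)
qed

definition H5_scale :: "complex \<Rightarrow> complex \<Rightarrow> nat \<Rightarrow> nat \<Rightarrow> complex" where
  "H5_scale a d p q = pochhammer d p * fact p * fact q * pochhammer (1 - a) q"

context
  fixes a d :: complex
  assumes a: "a \<notin> \<int>" and d: "\<forall>n::nat. d \<noteq> - of_nat n"
begin

lemma H5_scale_nonzero: "H5_scale a d p q \<noteq> 0"
  using pochhammer_add_of_nat_nonzero[OF d, of 0] pochhammer_nonzero_if_notin_Ints[of "1 - a"] a
  by (simp add: H5_scale_def)

lemma H5_coeff_scaled: "H5 a d p q * H5_scale a d p q = (-1)^q * pochhammer (a - of_nat q) p"
proof -
  have "pochhammer d p \<noteq> 0"
    using pochhammer_add_of_nat_nonzero[OF d, of 0] by simp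
  then have "H5 a d p q * H5_scale a d p q = poch_int a (int p - int q) * pochhammer (1 - a) q"
    by (simp add: H5_def H5_scale_def)
  then show ?thesis
    using poch_int_diff_mult_pochhammer[OF a] by simp
qed

lemma F11_x_mult_F01_negy_coeff_scaled:
  "bmul (F11_x a d) (F01_negy (1 - a)) p q * H5_scale a d p q = (-1)^q * pochhammer a p"
  using pochhammer_add_of_nat_nonzero[OF d, of 0] pochhammer_nonzero_if_notin_Ints[of "1 - a"] a
  by (simp add: F11_x_mult_F01_negy_coeff H5_scale_def hyp1F1_coeff_def hyp0F1_coeff_def)

lemma H5_term_coeff_scaled:
  assumes kl: "1 \<le> l" "l \<le> k" "k \<le> p"
  shows "H5_term a d (k, l) p q * H5_scale a d p q
       = (-1)^q * ((-1)^k * of_nat (p choose k) * fact k * pochhammer (a + of_nat k) (p - k))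
           * of_nat ((k - 1 choose (l - 1)) * (q choose l))"
proof (cases "l \<le> q")
  case False
  then show ?thesis by (simp add: H5_term_coeff binomial_eq_0)
next
  case True
  have pd: "pochhammer d p = pochhammer d k * pochhammer (d + of_nat k) (p - k)"
    using kl by (intro pochhammer_product) simp
  have pa: "pochhammer (1 - a) q = pochhammer (1 - a) l * pochhammer (1 - a + of_nat l) (q - l)"
    using True by (intro pochhammer_product) simp
  have fp: "(fact p :: complex) = of_nat (p choose k) * fact k * fact (p - k)"
    using arg_cong[OF binomial_fact_lemma[OF kl(3)], of "of_nat :: nat \<Rightarrow> complex"]
    by (simp add: algebra_simps)
  have fq: "(fact q :: complex) = of_nat (q choose l) * fact l * fact (q - l)"
    using arg_cong[OF binomial_fact_lemma[OF True], of "of_nat :: nat \<Rightarrow> complex"]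
    by (simp add: algebra_simps)
  have "k - 1 - (l - 1) = k - l" using kl by simp
  then have fk: "(fact (k - 1) :: complex) = of_nat (k - 1 choose (l - 1)) * fact (l - 1) * fact (k - l)"
    using arg_cong[OF binomial_fact_lemma[of "l - 1" "k - 1"], of "of_nat :: nat \<Rightarrow> complex"] kl
    by (simp add: algebra_simps)
  have sign: "(-1::complex) ^ (k + l) * (-1) ^ (q - l) = (-1)^q * (-1)^k"
  proof -
    have "k + l + (q - l) = q + k" using True by simp
    then show ?thesis by (metis power_add)
  qed
  have "pochhammer d k \<noteq> 0" "pochhammer (d + of_nat k) (p - k) \<noteq> 0"
    using pochhammer_add_of_nat_nonzero[OF d] pochhammer_add_of_nat_nonzero[OF d, of 0] by simp_all
  moreover have "pochhammer (1 - a) l \<noteq> 0" "pochhammer (1 - a + of_nat l) (q - l) \<noteq> 0"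
    using a by (simp_all add: pochhammer_nonzero_if_notin_Ints)
  moreover have "H5_term a d (k, l) p q
      = H5_term_weight a d k l * (hyp1F1_coeff (a + of_nat k) (d + of_nat k) (p - k)
          * ((-1)^(q - l) * hyp0F1_coeff (1 - a + of_nat l) (q - l)))"
    using True kl by (simp add: H5_term_coeff)
  ultimately show ?thesis
    using sign
    unfolding H5_term_weight_def H5_scale_def hyp1F1_coeff_def hyp0F1_coeff_def pd pa fp fq fk
    by (simp add: field_simps)
qed

lemma H5_term_row_scaled:
  assumes k: "1 \<le> k" "k \<le> p"
  shows "(\<Sum>l=1..k. H5_term a d (k, l) p q) * H5_scale a d p q
       = (-1)^q * (of_nat (p choose k) * ((-1)^k * pochhammer (of_nat q) k * pochhammer (a + of_nat k) (p - k)))"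
proof -
  define c where
    "c = (-1::complex)^q * ((-1)^k * of_nat (p choose k) * fact k * pochhammer (a + of_nat k) (p - k))"
  have "(\<Sum>l=1..k. H5_term a d (k, l) p q) * H5_scale a d p q
      = (\<Sum>l=1..k. c * of_nat ((k - 1 choose (l - 1)) * (q choose l)))"
    unfolding sum_distrib_right c_def using k by (intro sum.cong refl) (simp add: H5_term_coeff_scaled)
  also have "\<dots> = c * of_nat (\<Sum>l=1..k. (k - 1 choose (l - 1)) * (q choose l))"
    by (simp only: sum_distrib_left of_nat_sum)
  also have "\<dots> = c * of_nat ((q + k - 1) choose k)"
    by (simp only: sum_choose_pred_mult_choose[OF k(1)])
  also have "\<dots> = (-1)^q * (of_nat (p choose k) * ((-1)^k * pochhammer (of_nat q) k * pochhammer (a + of_nat k) (p - k)))"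
    by (simp add: c_def pochhammer_of_nat_eq_fact_choose)
  finally show ?thesis .
qed

lemma H5_coeff_expansion:
  "H5 a d p q = badd (bmul (F11_x a d) (F01_negy (1 - a)))
                  (formal_sum {(k, l). 1 \<le> l \<and> l \<le> k} (H5_term a d)) p q"
proof -
  let ?f = "\<lambda>k. of_nat (p choose k) * ((-1)^k * pochhammer (of_nat q) k * pochhammer (a + of_nat k) (p - k))"
  have "badd (bmul (F11_x a d) (F01_negy (1 - a))) (formal_sum {(k, l). 1 \<le> l \<and> l \<le> k} (H5_term a d)) p q
          * H5_scale a d p q
      = (-1)^q * pochhammer a p + (\<Sum>k=1..p. (\<Sum>l=1..k. H5_term a d (k, l) p q) * H5_scale a d p q)"
    unfolding badd_def formal_sum_H5_term_coeff
    by (simp add: distrib_right sum_distrib_right F11_x_mult_F01_negy_coeff_scaled)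
  also have "\<dots> = (-1)^q * pochhammer a p + (\<Sum>k=1..p. (-1)^q * ?f k)"
    by (intro arg_cong2[where f = "(+)"] refl sum.cong H5_term_row_scaled) auto
  also have "\<dots> = (-1)^q * (?f 0 + (\<Sum>k=1..p. ?f k))"
    by (simp add: sum_distrib_left distrib_left)
  also have "\<dots> = (-1)^q * pochhammer (a - of_nat q) p"
    by (simp add: pochhammer_diff_expansion atMost_atLeast0 sum.atLeast_Suc_atMost)
  also have "\<dots> = H5 a d p q * H5_scale a d p q"
    by (rule H5_coeff_scaled[symmetric])
  finally show ?thesis
    using H5_scale_nonzero by simp
qed

end

theorem mainTheorem10:
  fixes a d :: complex
  assumes "a \<notin> \<int>"
    and "\<forall>n::nat. d \<noteq> - of_nat n"
  defines "T \<equiv> (\<lambda>(k, l). bsmult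
              ((-1) ^ (k + l) * fact (k - 1)
                 / (fact (l - 1) * fact l * fact (k - l))
                 / (pochhammer (1 - a) l * pochhammer d k))
              (bmul (bmonom k l)
                 (bmul (F11_x (a + of_nat k) (d + of_nat k))
                       (F01_negy (1 - a + of_nat l)))))"
  shows "formal_summable {(k, l). 1 \<le> l \<and> l \<le> k} T
    \<and> H5 a d = badd (bmul (F11_x a d) (F01_negy (1 - a)))
                     (formal_sum {(k, l). 1 \<le> l \<and> l \<le> k} T)"
proof -
  have T_eq: "T = H5_term a d"
    by (simp add: T_def H5_term_def H5_term_weight_def)
  show ?thesis
    unfolding T_eq using formal_summable_H5_term H5_coeff_expansion[OF assms(1,2)] by (simp add: fun_eq_iff)
qed

end
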